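(* Let $q$ be an odd prime power, $P\in\mathbb{F}_q[T]$ monic irreducible with $\chi_q(P)=-1$, and $h=(h_1,\dots,h_k)$ a $k$-tuple of pairwise distinct polynomials. Then $\delta_{q,h}(P)=1-\frac{\eta}{|P|+1}$ for some real $\eta$ with $1\le\eta\le k$; moreover $\eta=1$ when $h$ is the $1$-tuple $(0)$, and $\eta=k$ when $P\nmid\Delta_h$.
   Context: $|P|=q^{\deg P}$; $\chi_q(f)=0$ if $f(0)=0$, $1$ if $f(0)$ is a nonzero square in $\mathbb{F}_q$, $-1$ otherwise. $\mathcal{A}_q(P^\nu)=\{A^2+TB^2\bmod P^\nu:A,B\in\mathbb{F}_q[T]\}$, $\mathcal{A}_{q,h}(P^\nu)=\{f\bmod P^\nu:f+h_i\in\mathcal{A}_q(P^\nu)\ \forall i\}$, $\delta_{q,h}(P)=\lim_{\nu\to\infty}|P|^{-\nu}\#\mathcal{A}_{q,h}(P^\nu)$. $\Delta_h=\prod_{i\ne j}(h_i-h_j)$ (empty product $=1$). *)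

theory Defs
  imports "HOL-Computational_Algebra.Polynomial" Complex_Main
begin

definition polnorm :: "'a::{finite,field} poly \<Rightarrow> nat" where
  "polnorm P = card (UNIV :: 'a set) ^ degree P"

definition chi_q :: "'a::{finite,field} poly \<Rightarrow> int" where
  "chi_q f = (if poly f 0 = 0 then 0
              else if (\<exists>y. poly f 0 = y ^ 2) then 1 else -1)"

definition Aq :: "'a::{finite,field} poly \<Rightarrow> 'a poly set" where
  "Aq M = {(A ^ 2 + [:0, 1:] * B ^ 2) mod M | A B. True}"

definition Aqh :: "'a::{finite,field} poly \<Rightarrow> 'a poly list \<Rightarrow> 'a poly set" where
  "Aqh M h = {f mod M | f. \<forall>i < length h. (f + h ! i) mod M \<in> Aq M}"

definition Delta_h :: "'a::{finite,field} poly list \<Rightarrow> 'a poly" where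
  "Delta_h h = (\<Prod>(i, j) \<in> {(i, j). i < length h \<and> j < length h \<and> i \<noteq> j}. h ! i - h ! j)"

end

theory Submission
  imports Defs "HOL-Computational_Algebra.Polynomial_Factorial"
begin

text \<open>
  Since \<open>\<chi>\<^sub>q(P) = -1\<close>, \<open>-T\<close> is not a square modulo \<open>P\<close>: otherwise substituting \<open>-T\<^sup>2\<close> for \<open>T\<close>
  factors \<open>P(-T\<^sup>2)\<close> as \<open>c g(T) g(-T)\<close>, making \<open>P(0)\<close> a square.  Hence \<open>P\<close> divides \<open>A\<^sup>2 + T B\<^sup>2\<close>
  only if it divides \<open>A\<close> and \<open>B\<close>.  Every residue modulo \<open>P\<close> is of the form \<open>A\<^sup>2 + T B\<^sup>2\<close>
  (pigeonhole on the squares), Hensel's lemma lifts this to \<open>P\<^sup>\<nu>\<close> when \<open>P \<nmid> f\<close>, residues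
  divisible by \<open>P\<close> exactly once are never represented, and \<open>P\<^sup>2 f\<close> is represented modulo \<open>P\<^sup>\<nu>\<^sup>+\<^sup>2\<close>
  iff \<open>f\<close> is modulo \<open>P\<^sup>\<nu>\<close>.  So the density \<open>a\<^sub>\<nu>\<close> of represented residues satisfies
  \<open>a\<^sub>\<nu>\<^sub>+\<^sub>2 = 1 - 1/|P| + a\<^sub>\<nu>/|P|\<^sup>2\<close> and tends to \<open>|P|/(|P| + 1)\<close>.

  For a tuple \<open>h\<close>, representability modulo \<open>P\<^sup>\<nu>\<^sup>+\<^sup>1\<close> and modulo \<open>P\<^sup>\<nu>\<close> can differ only where
  \<open>P\<^sup>\<nu>\<close> divides some \<open>f + h\<^sub>i\<close>, so the densities converge.  The bad sets for the individual
  shifts have density \<open>1/(|P| + 1)\<close> each; their union lies between one of them and their sum, and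
  it is their disjoint union when \<open>P \<nmid> \<Delta>\<^sub>h\<close>, since a non-represented residue is divisible by \<open>P\<close>.
\<close>

lemma two_neq_zero_if_odd_card:
  assumes "odd (card (UNIV :: 'a::{finite,ring_1} set))"
  shows "(2::'a) \<noteq> 0"
proof
  assume two: "(2::'a) = 0"
  \<comment> \<open>Then \<open>x \<mapsto> x + 1\<close> is a fixed-point-free involution, so \<open>UNIV\<close> splits into pairs.\<close>
  define pairs where "pairs = range (\<lambda>x::'a. {x, x + 1})"
  have "x + 1 + 1 = x" for x :: 'a
    using two by (simp add: add.assoc flip: one_add_one)
  then have disjoint: "c1 = c2 \<or> c1 \<inter> c2 = {}" if "c1 \<in> pairs" "c2 \<in> pairs" for c1 c2
    using that unfolding pairs_def by (auto simp: insert_commute)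
  have "\<Union>pairs = UNIV"
    unfolding pairs_def by auto
  moreover have "card c = 2" if "c \<in> pairs" for c
    using that unfolding pairs_def by auto
  ultimately have "2 * card pairs = card (UNIV :: 'a set)"
    using card_partition[of pairs 2] disjoint by (metis finite)
  with assms show False
    by (metis dvd_triv_left)
qed

lemma card_le_mult_card_image:
  assumes "finite A" and "\<And>x. x \<in> A \<Longrightarrow> card {y \<in> A. f y = f x} \<le> k"
  shows "card A \<le> k * card (f ` A)"
proof -
  have "card A = card (\<Union>z\<in>f ` A. {y \<in> A. f y = z})"
    by (rule arg_cong[where f = card]) auto
  also have "\<dots> \<le> (\<Sum>z\<in>f ` A. card {y \<in> A. f y = z})"
    by (rule card_UN_le) (use assms(1) in simp)
  also have "\<dots> \<le> (\<Sum>z\<in>f ` A. k)"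
    by (rule sum_mono) (use assms(2) in auto)
  finally show ?thesis
    by (simp add: mult.commute)
qed

lemma convergent_if_diff_le_geometric:
  fixes x :: "nat \<Rightarrow> real"
  assumes "\<And>n. \<bar>x (Suc n) - x n\<bar> \<le> C * r ^ n" and "0 \<le> r" "r < 1"
  shows "convergent x"
proof -
  have "summable (\<lambda>n. C * r ^ n)"
    using assms(2,3) by (intro summable_mult summable_geometric) simp
  then have "summable (\<lambda>n. x (Suc n) - x n)"
    by (rule summable_comparison_test') (use assms(1) in simp)
  then have "convergent (\<lambda>n. x n - x 0)"
    by (simp add: summable_iff_convergent sum_lessThan_telescope)
  then show ?thesis
    by (simp add: convergent_diff_const_right_iff)
qed

lemma poly_bezout_common_divisor:
  fixes A B :: "'a::field poly"
  assumes "A \<noteq> 0"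
  obtains g u v where "g = u * A + v * B" "g dvd A" "g dvd B" "g \<noteq> 0"
proof -
  define combos where "combos = {g. g \<noteq> 0 \<and> (\<exists>u v. g = u * A + v * B)}"
  have "A = 1 * A + 0 * B"
    by simp
  with assms have "A \<in> combos"
    unfolding combos_def by blast
  then obtain g where g: "g \<in> combos" and least: "\<And>g'. g' \<in> combos \<Longrightarrow> degree g \<le> degree g'"
    using ex_has_least_nat[of "\<lambda>g. g \<in> combos" A degree] by blast
  from g obtain u v where uv: "g = u * A + v * B" and "g \<noteq> 0"
    unfolding combos_def by blast
  have "g dvd a * A + b * B" for a b
  proof (rule ccontr)
    assume "\<not> g dvd a * A + b * B"
    then have rem: "(a * A + b * B) mod g \<noteq> 0"
      by (simp add: dvd_eq_mod_eq_0)
    define q where "q = (a * A + b * B) div g"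
    have "(a * A + b * B) mod g = a * A + b * B - q * g"
      unfolding q_def by (simp add: minus_div_mult_eq_mod)
    also have "\<dots> = (a - q * u) * A + (b - q * v) * B"
      unfolding uv by (simp add: algebra_simps)
    finally have "(a * A + b * B) mod g = (a - q * u) * A + (b - q * v) * B" .
    with rem have "(a * A + b * B) mod g \<in> combos"
      unfolding combos_def by blast
    with least degree_mod_less'[OF \<open>g \<noteq> 0\<close> rem] show False
      by (meson not_less)
  qed
  from this[of 1 0] this[of 0 1] have "g dvd A" "g dvd B" by simp_all
  with that uv \<open>g \<noteq> 0\<close> show ?thesis by blast
qed

lemma irreducible_bezout:
  fixes P a :: "'a::field poly"
  assumes "irreducible P" "\<not> P dvd a"
  obtains u v where "u * P + v * a = 1"
proof -
  have "P \<noteq> 0"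
    using assms(1) by auto
  then obtain g u v where g: "g = u * P + v * a" "g dvd P" "g dvd a"
    using poly_bezout_common_divisor[of P a] by blast
  have "is_unit g"
    using irreducibleD'[OF assms(1) \<open>g dvd P\<close>] dvd_trans[OF _ \<open>g dvd a\<close>] assms(2) by blast
  then obtain w where w: "1 = g * w"
    by (rule dvdE)
  have "(w * u) * P + (w * v) * a = g * w"
    unfolding g(1) by (simp add: algebra_simps)
  then show ?thesis
    unfolding w[symmetric] by (rule that)
qed

lemma smult_two: "smult 2 p = p + (p :: 'a::comm_ring_1 poly)"
  by (metis one_add_one smult_add_left smult_1_left)

abbreviation T :: "'a::comm_ring_1 poly" where "T \<equiv> [:0, 1:]"

lemma poly_mult_dvd_if_coprime:
  fixes f g F :: "'a::field poly"
  assumes "f \<noteq> 0" "coprime f g" "f dvd F" "g dvd F"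
  shows "f * g dvd F"
proof -
  obtain e a b where e: "e = a * f + b * g" "e dvd f" "e dvd g"
    using poly_bezout_common_divisor[OF \<open>f \<noteq> 0\<close>, of g] by blast
  then have "is_unit e"
    using assms(2) coprime_common_divisor by blast
  then obtain w where "1 = e * w"
    by (rule dvdE)
  then have "F = (e * w) * F"
    by simp
  also have "\<dots> = (w * a) * (f * F) + (w * b) * (g * F)"
    unfolding e(1) by (simp add: algebra_simps)
  finally have "F = (w * a) * (f * F) + (w * b) * (F * g)"
    by (simp add: mult.commute)
  moreover have "f * g dvd f * F" "f * g dvd F * g"
    using assms(3,4) by (simp_all add: mult_dvd_mono)
  ultimately show ?thesis
    by (metis dvd_add dvd_mult)
qed

lemma poly_dvd_antisym_const:
  fixes F G :: "'a::field poly"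
  assumes "F \<noteq> 0" "F dvd G" "G dvd F"
  obtains c where "F = G * [:c:]"
proof -
  obtain k where k: "F = G * k"
    using assms(3) by (rule dvdE)
  then have "G \<noteq> 0"
    using assms(1) by auto
  then have "degree F \<le> degree G"
    using assms(2) by (rule dvd_imp_degree_le[rotated])
  with k assms(1) have "degree k = 0"
    by (auto simp: degree_mult_eq)
  then obtain c where "k = [:c:]"
    by (rule degree_eq_zeroE)
  with k show thesis
    by (intro that) simp
qed

text \<open>A divisor \<open>F\<close> of \<open>U\<^sup>2 - T\<^sup>2\<close> with \<open>F\<close> and \<open>U\<close> even and \<open>F(0) \<noteq> 0\<close> splits as \<open>c g(T) g(-T)\<close>:
  take \<open>g\<close> a common divisor of \<open>F\<close> and \<open>U - T\<close>; then \<open>g(-T)\<close> divides \<open>U + T\<close>, and the two are coprime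
  because a common divisor would divide \<open>2T\<close>.\<close>

lemma even_divisor_of_diff_squares:
  fixes F U :: "'a::field poly"
  assumes two: "(2::'a) \<noteq> 0" and F0: "poly F 0 \<noteq> 0"
    and F_even: "F \<circ>\<^sub>p [:0, -1:] = F" and U_even: "U \<circ>\<^sub>p [:0, -1:] = U"
    and dvd: "F dvd (U - T) * (U + T)"
  obtains g c where "F = g * (g \<circ>\<^sub>p [:0, -1:]) * [:c:]" "g \<noteq> 0"
proof -
  define \<sigma> where "\<sigma> p = p \<circ>\<^sub>p [:0, -1:]" for p :: "'a poly"
  have \<sigma>_hom: "\<sigma> (p * q) = \<sigma> p * \<sigma> q" "\<sigma> (p + q) = \<sigma> p + \<sigma> q" "\<sigma> (p - q) = \<sigma> p - \<sigma> q" for p q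
    by (simp_all add: \<sigma>_def pcompose_mult pcompose_add pcompose_diff)
  have \<sigma>_dvd: "p dvd q \<Longrightarrow> \<sigma> p dvd \<sigma> q" for p q
    by (auto simp: \<sigma>_hom elim!: dvdE)
  have \<sigma>_T: "\<sigma> T = - T"
    by (simp add: \<sigma>_def pcompose_pCons)
  have "F \<noteq> 0"
    using F0 by auto
  obtain g u v where g: "g = u * F + v * (U - T)" "g dvd F" "g dvd U - T" "g \<noteq> 0"
    using poly_bezout_common_divisor[OF \<open>F \<noteq> 0\<close>, of "U - T"] by blast
  have \<sigma>g: "\<sigma> g = \<sigma> u * F + \<sigma> v * (U + T)"
    using g(1) F_even U_even by (simp add: \<sigma>_hom \<sigma>_T) (simp add: \<sigma>_def)
  have "\<sigma> g dvd F" "\<sigma> g dvd U + T"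
    using \<sigma>_dvd[OF g(2)] \<sigma>_dvd[OF g(3)] F_even U_even unfolding \<sigma>_hom \<sigma>_T
    by (simp_all only: \<sigma>_def diff_minus_eq_add)
  have "coprime g (\<sigma> g)"
  proof (rule coprimeI)
    fix e
    assume "e dvd g" "e dvd \<sigma> g"
    then have "e dvd (U + T) - (U - T)"
      using dvd_trans[OF _ g(3)] dvd_trans[OF _ \<open>\<sigma> g dvd U + T\<close>] by (blast intro: dvd_diff)
    then have "e dvd smult 2 T"
      by (simp add: smult_two)
    then have "e dvd T"
      using two by (rule dvd_smult_cancel)
    moreover have "\<not> T dvd e"
      using F0 dvd_trans[OF _ dvd_trans[OF \<open>e dvd g\<close> g(2)]] dvd_iff_poly_eq_0[of 0 F] by auto
    moreover have "irreducible (T :: 'a poly)"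
      by (rule irreducible_linear_field_poly) simp
    ultimately show "is_unit e"
      using irreducibleD' by blast
  qed
  then have "g * \<sigma> g dvd F"
    using g(2,4) \<open>\<sigma> g dvd F\<close> by (intro poly_mult_dvd_if_coprime)
  moreover have "g * \<sigma> g = F * (u * \<sigma> u * F + u * \<sigma> v * (U + T) + v * \<sigma> u * (U - T))
      + v * \<sigma> v * ((U - T) * (U + T))"
    unfolding \<sigma>g unfolding g(1) by (simp add: algebra_simps)
  then have "F dvd g * \<sigma> g"
    using dvd by (metis dvd_add dvd_mult dvd_triv_left)
  ultimately obtain c where "F = g * \<sigma> g * [:c:]"
    using poly_dvd_antisym_const[OF \<open>F \<noteq> 0\<close>] by blast
  with g(4) show thesis
    by (intro that) (simp_all add: \<sigma>_def)
qed

lemma const_coeff_square_if_dvd_square_plus_T: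
  fixes P C :: "'a::field poly"
  assumes two: "(2::'a) \<noteq> 0" and monic: "lead_coeff P = 1" and P0: "poly P 0 \<noteq> 0"
    and dvd: "P dvd C\<^sup>2 + T"
  shows "\<exists>y. poly P 0 = y\<^sup>2"
proof -
  \<comment> \<open>Substituting \<open>-T\<^sup>2\<close> for \<open>T\<close> turns \<open>C\<^sup>2 + T\<close> into a difference of squares.\<close>
  define F where "F = P \<circ>\<^sub>p [:0, 0, -1:]"
  define U where "U = C \<circ>\<^sub>p [:0, 0, -1:]"
  have even: "(p \<circ>\<^sub>p [:0, 0, -1:]) \<circ>\<^sub>p [:0, -1:] = p \<circ>\<^sub>p [:0, 0, -1:]" for p :: "'a poly"
    by (simp add: pcompose_assoc[symmetric] pcompose_pCons)
  have F0: "poly F 0 = poly P 0"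
    by (simp add: F_def poly_pcompose)
  obtain k where "C\<^sup>2 + T = P * k"
    using dvd by (rule dvdE)
  then have "(C\<^sup>2 + T) \<circ>\<^sub>p [:0, 0, -1:] = F * (k \<circ>\<^sub>p [:0, 0, -1:])"
    by (simp add: F_def pcompose_mult)
  moreover have "(C\<^sup>2 + T) \<circ>\<^sub>p [:0, 0, -1:] = (U - T) * (U + T)"
    by (simp add: U_def pcompose_add pcompose_mult power2_eq_square pcompose_pCons algebra_simps)
  ultimately have "F dvd (U - T) * (U + T)"
    by (metis dvd_triv_left)
  moreover have "F \<circ>\<^sub>p [:0, -1:] = F" "U \<circ>\<^sub>p [:0, -1:] = U"
    unfolding F_def U_def by (rule even)+
  ultimately obtain g c where g: "F = g * (g \<circ>\<^sub>p [:0, -1:]) * [:c:]" "g \<noteq> 0"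
    using even_divisor_of_diff_squares[OF two, of F U] F0 P0 by auto
  have lead_reflect: "lead_coeff (g \<circ>\<^sub>p [:0, -1:]) = (-1) ^ degree g * lead_coeff g"
    by (subst lead_coeff_comp) auto
  then have "g \<circ>\<^sub>p [:0, -1:] \<noteq> 0" "c \<noteq> 0"
    using g F0 P0 by auto
  then have "degree F = 2 * degree g"
    using g by (simp add: degree_pcompose degree_mult_eq)
  moreover have "degree F = 2 * degree P"
    by (simp add: F_def degree_pcompose)
  ultimately have "degree g = degree P"
    by simp
  have "(-1) ^ degree P = lead_coeff F"
    unfolding F_def by (subst lead_coeff_comp) (use monic in auto)
  also have "\<dots> = c * (-1) ^ degree P * (lead_coeff g)\<^sup>2"
    unfolding g(1) lead_coeff_mult lead_reflect \<open>degree g = degree P\<close> by (simp add: power2_eq_square)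
  finally have c: "c * (lead_coeff g)\<^sup>2 = 1"
    by simp
  have "poly P 0 = c * (poly g 0)\<^sup>2"
    using F0 g by (simp add: poly_pcompose power2_eq_square)
  also have "\<dots> = c * (lead_coeff g)\<^sup>2 * (poly g 0 / lead_coeff g)\<^sup>2"
    using \<open>g \<noteq> 0\<close> by (simp add: power_divide)
  finally have "poly P 0 = (poly g 0 / lead_coeff g)\<^sup>2"
    by (simp add: c)
  then show ?thesis ..
qed

section \<open>Counting residues modulo a polynomial\<close>

definition deg_below :: "nat \<Rightarrow> 'a::zero poly set" where
  "deg_below n = {p. p = 0 \<or> degree p < n}"

lemma pCons_in_deg_below_Suc: "pCons a p \<in> deg_below (Suc n) \<longleftrightarrow> p \<in> deg_below n"
  unfolding deg_below_def by (cases "p = 0") auto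

lemma card_deg_below: "card (deg_below n :: 'a::{finite,zero} poly set) = card (UNIV :: 'a set) ^ n"
proof (induction n)
  case 0
  have "deg_below 0 = {0 :: 'a poly}"
    unfolding deg_below_def by auto
  then show ?case
    by simp
next
  case (Suc n)
  have "deg_below (Suc n) = (\<lambda>(a, p). pCons a p) ` (UNIV \<times> deg_below n :: ('a \<times> 'a poly) set)"
  proof (intro set_eqI iffI)
    fix q :: "'a poly"
    assume q: "q \<in> deg_below (Suc n)"
    obtain a p where "q = pCons a p"
      by (rule pCons_cases)
    with q show "q \<in> (\<lambda>(a, p). pCons a p) ` (UNIV \<times> deg_below n)"
      by (auto simp: pCons_in_deg_below_Suc)
  qed (auto simp: pCons_in_deg_below_Suc)
  moreover have "inj_on (\<lambda>(a, p). pCons a p) (UNIV \<times> deg_below n :: ('a \<times> 'a poly) set)"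
    by (auto simp: inj_on_def)
  ultimately show ?case
    using Suc.IH by (simp add: card_image card_cartesian_product)
qed

lemma finite_deg_below [simp]: "finite (deg_below n :: 'a::{finite,zero} poly set)"
  by (rule card_ge_0_finite) (simp add: card_deg_below finite_UNIV_card_ge_0)

lemma mod_in_deg_below: "(M :: 'a::field poly) \<noteq> 0 \<Longrightarrow> f mod M \<in> deg_below (degree M)"
  unfolding deg_below_def using degree_mod_less by blast

lemma mod_eq_self_if_deg_below: "(r :: 'a::field poly) \<in> deg_below (degree M) \<Longrightarrow> r mod M = r"
  unfolding deg_below_def by (auto intro: mod_poly_less)

lemma deg_below_eq_if_dvd_diff:
  fixes r r' :: "'a::field poly"
  assumes "r \<in> deg_below (degree M)" "r' \<in> deg_below (degree M)" "M dvd r - r'"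
  shows "r = r'"
  using assms mod_eq_self_if_deg_below mod_eq_dvd_iff by metis

lemma deg_below_mono: "m \<le> n \<Longrightarrow> deg_below m \<subseteq> deg_below n"
  unfolding deg_below_def by auto

lemma add_in_deg_below: "p \<in> deg_below n \<Longrightarrow> q \<in> deg_below n \<Longrightarrow> p + q \<in> deg_below n"
  unfolding deg_below_def using degree_add_le_max[of p q] by auto

lemma mult_in_deg_below_iff:
  fixes M s :: "'a::field poly"
  assumes "M \<noteq> 0"
  shows "M * s \<in> deg_below (degree M + n) \<longleftrightarrow> s \<in> deg_below n"
  using assms by (cases "s = 0") (auto simp: deg_below_def degree_mult_eq)

lemma polnorm_mult:
  "M \<noteq> 0 \<Longrightarrow> N \<noteq> 0 \<Longrightarrow> polnorm (M * N) = polnorm M * polnorm N"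
  by (simp add: polnorm_def degree_mult_eq power_add)

lemma polnorm_power: "polnorm (P ^ n) = polnorm P ^ n"
proof (cases "P = 0")
  case True
  then show ?thesis
    by (cases n) (simp_all add: polnorm_def)
next
  case False
  then have "degree (P ^ n) = degree P * n"
    by (simp add: degree_power_eq)
  then show ?thesis
    by (simp add: polnorm_def power_mult)
qed

definition count_mod :: "'a::{finite,field} poly \<Rightarrow> ('a poly \<Rightarrow> bool) \<Rightarrow> nat" where
  "count_mod M S = card {r \<in> deg_below (degree M). S r}"

lemma count_mod_True: "count_mod M (\<lambda>_. True) = polnorm M"
  by (simp add: count_mod_def polnorm_def card_deg_below)

lemma count_mod_mono: "(\<And>r. S r \<Longrightarrow> S' r) \<Longrightarrow> count_mod M S \<le> count_mod M S'"
  unfolding count_mod_def by (rule card_mono) auto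

lemma count_mod_le_polnorm: "count_mod M S \<le> polnorm M"
  using count_mod_mono[of S "\<lambda>_. True"] by (simp add: count_mod_True)

lemma count_mod_not: "count_mod M (\<lambda>r. \<not> S r) = polnorm M - count_mod M S"
proof -
  have "{r \<in> deg_below (degree M). \<not> S r} = deg_below (degree M) - {r \<in> deg_below (degree M). S r}"
    by auto
  then show ?thesis
    unfolding count_mod_def polnorm_def by (simp add: card_Diff_subset card_deg_below)
qed

lemma count_mod_disj:
  "(\<And>r. \<not> (S r \<and> S' r)) \<Longrightarrow> count_mod M (\<lambda>r. S r \<or> S' r) = count_mod M S + count_mod M S'"
  unfolding count_mod_def by (subst card_Un_disjoint[symmetric]) (auto intro: arg_cong[where f = card])

lemma count_mod_le_add:
  "(\<And>r. S r \<Longrightarrow> S' r \<or> E r) \<Longrightarrow> count_mod M S \<le> count_mod M S' + count_mod M E"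
  unfolding count_mod_def
  by (rule order_trans[OF card_mono card_Un_le]) auto

lemma count_mod_Bex_le:
  "finite I \<Longrightarrow> count_mod M (\<lambda>r. \<exists>i\<in>I. S i r) \<le> (\<Sum>i\<in>I. count_mod M (S i))"
  unfolding count_mod_def
  by (rule order_trans[OF eq_imp_le card_UN_le]) (auto intro: arg_cong[where f = card])

lemma count_mod_Bex_disjoint:
  assumes "finite I" and "\<And>i j r. i \<in> I \<Longrightarrow> j \<in> I \<Longrightarrow> i \<noteq> j \<Longrightarrow> \<not> (S i r \<and> S j r)"
  shows "count_mod M (\<lambda>r. \<exists>i\<in>I. S i r) = (\<Sum>i\<in>I. count_mod M (S i))"
  unfolding count_mod_def
  by (subst card_UN_disjoint[symmetric]) (use assms in \<open>auto intro: arg_cong[where f = card]\<close>)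

lemma bij_betw_deg_below_mult:
  fixes M N :: "'a::{finite,field} poly"
  assumes "M \<noteq> 0" "N \<noteq> 0"
  shows "bij_betw (\<lambda>(a, b). a + M * b) (deg_below (degree M) \<times> deg_below (degree N)) (deg_below (degree (M * N)))"
proof -
  let ?A = "deg_below (degree M) :: 'a poly set" and ?B = "deg_below (degree N) :: 'a poly set"
  have inj: "inj_on (\<lambda>(a, b). a + M * b) (?A \<times> ?B)"
  proof (rule inj_onI, clarify)
    fix a b a' b'
    assume a: "a \<in> ?A" "a' \<in> ?A" and eq: "a + M * b = a' + M * b'"
    from a have "(a + M * b) mod M = a" "(a' + M * b') mod M = a'"
      by (simp_all add: mod_eq_self_if_deg_below)
    with eq have "a = a'"
      by simp
    with eq \<open>M \<noteq> 0\<close> show "a = a' \<and> b = b'"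
      by simp
  qed
  have "a + M * b \<in> deg_below (degree (M * N))" if "a \<in> ?A" "b \<in> ?B" for a b
  proof -
    have "a \<in> deg_below (degree M + degree N)"
      using that(1) deg_below_mono[of "degree M" "degree M + degree N"] by auto
    moreover have "M * b \<in> deg_below (degree M + degree N)"
      using that(2) mult_in_deg_below_iff[OF \<open>M \<noteq> 0\<close>] by simp
    ultimately show ?thesis
      using assms by (simp add: degree_mult_eq add_in_deg_below)
  qed
  then have "(\<lambda>(a, b). a + M * b) ` (?A \<times> ?B) \<subseteq> deg_below (degree (M * N))"
    by auto
  moreover have "card ((\<lambda>(a, b). a + M * b) ` (?A \<times> ?B)) = card (deg_below (degree (M * N)) :: 'a poly set)"
    using assms by (simp add: card_image[OF inj] card_cartesian_product card_deg_below degree_mult_eq power_add)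
  ultimately show ?thesis
    using inj by (simp add: bij_betw_def card_subset_eq)
qed

lemma count_mod_mult:
  fixes M N :: "'a::{finite,field} poly"
  assumes "M \<noteq> 0" "N \<noteq> 0" and periodic: "\<And>g. S (g mod M) = S g"
  shows "count_mod (M * N) S = count_mod M S * polnorm N"
proof -
  let ?\<phi> = "\<lambda>(a, b). a + M * b"
    and ?A = "deg_below (degree M) :: 'a poly set" and ?B = "deg_below (degree N) :: 'a poly set"
  have bij: "bij_betw ?\<phi> (?A \<times> ?B) (deg_below (degree (M * N)))"
    using assms(1,2) by (rule bij_betw_deg_below_mult)
  have "S (a + M * b) = S a" if "a \<in> ?A" for a b
    using periodic[of "a + M * b"] periodic[of a] that by (simp add: mod_eq_self_if_deg_below)
  then have "{r \<in> deg_below (degree (M * N)). S r} = ?\<phi> ` ({a \<in> ?A. S a} \<times> ?B)"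
    unfolding bij_betw_imp_surj_on[OF bij, symmetric] by auto
  moreover have "inj_on ?\<phi> ({a \<in> ?A. S a} \<times> ?B)"
    by (rule inj_on_subset[OF bij_betw_imp_inj_on[OF bij]]) auto
  ultimately show ?thesis
    unfolding count_mod_def polnorm_def by (simp add: card_image card_cartesian_product card_deg_below)
qed

lemma count_mod_shift:
  fixes M :: "'a::{finite,field} poly"
  assumes "M \<noteq> 0" and periodic: "\<And>g. S (g mod M) = S g"
  shows "count_mod M (\<lambda>r. S (r + h)) = count_mod M S"
proof -
  let ?D = "deg_below (degree M)"
  have "bij_betw (\<lambda>r. (r + h) mod M) {r \<in> ?D. S (r + h)} {r \<in> ?D. S r}"
  proof (rule bij_betw_byWitness[where f' = "\<lambda>r. (r - h) mod M"])
    show "\<forall>r\<in>{r \<in> ?D. S (r + h)}. ((r + h) mod M - h) mod M = r"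
      by (simp add: mod_diff_left_eq mod_eq_self_if_deg_below)
    show "\<forall>r\<in>{r \<in> ?D. S r}. ((r - h) mod M + h) mod M = r"
      by (simp add: mod_add_left_eq mod_eq_self_if_deg_below)
    show "(\<lambda>r. (r + h) mod M) ` {r \<in> ?D. S (r + h)} \<subseteq> {r \<in> ?D. S r}"
      using assms by (auto simp: mod_in_deg_below)
    have "S ((r - h) mod M + h) = S r" for r
      using periodic[of "(r - h) mod M + h"] periodic[of r] by (simp add: mod_add_left_eq)
    then show "(\<lambda>r. (r - h) mod M) ` {r \<in> ?D. S r} \<subseteq> {r \<in> ?D. S (r + h)}"
      using assms by (auto simp: mod_in_deg_below)
  qed
  then show ?thesis
    unfolding count_mod_def by (rule bij_betw_same_card)
qed

lemma count_mod_dvd: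
  fixes M :: "'a::{finite,field} poly"
  assumes "M \<noteq> 0"
  shows "count_mod M (\<lambda>r. M dvd r) = 1"
proof -
  have "{r \<in> deg_below (degree M). M dvd r} = {0}"
    using deg_below_eq_if_dvd_diff[of _ M 0] by (auto simp: deg_below_def)
  then show ?thesis
    by (simp add: count_mod_def)
qed

lemma count_mod_mult_dvd:
  fixes M N :: "'a::{finite,field} poly"
  assumes "M \<noteq> 0" "N \<noteq> 0"
  shows "count_mod (M * N) (\<lambda>r. M dvd r \<and> S (r div M)) = count_mod N S"
proof -
  have "{r \<in> deg_below (degree (M * N)). M dvd r \<and> S (r div M)} = (\<lambda>s. M * s) ` {s \<in> deg_below (degree N). S s}"
    using assms mult_in_deg_below_iff[OF \<open>M \<noteq> 0\<close>] by (auto simp: degree_mult_eq image_iff elim!: dvdE)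
  moreover have "inj_on (\<lambda>s. M * s) {s \<in> deg_below (degree N). S s}"
    using \<open>M \<noteq> 0\<close> by (auto simp: inj_on_def)
  ultimately show ?thesis
    unfolding count_mod_def by (simp add: card_image)
qed

lemma dvd_Delta_h: "i < length h \<Longrightarrow> j < length h \<Longrightarrow> i \<noteq> j \<Longrightarrow> h ! i - h ! j dvd Delta_h h"
  unfolding Delta_h_def
  by (rule dvd_prodI[where f = "\<lambda>(i, j). h ! i - h ! j" and a = "(i, j)", simplified])
    (auto intro: finite_subset[of _ "{..<length h} \<times> {..<length h}"])

lemma Delta_h_singleton: "Delta_h [x] = 1"
proof -
  have "{(i, j). i < length [x] \<and> j < length [x] \<and> i \<noteq> j} = {}"
    by auto
  then show ?thesis
    unfolding Delta_h_def by (simp only: prod.empty)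
qed

section \<open>Values of \<open>A\<^sup>2 + T B\<^sup>2\<close> modulo powers of an inert prime\<close>

text \<open>By \<open>not_dvd_square_plus_T\<close>, \<open>P\<close> stays prime in \<open>\<bbbF>\<^sub>q[T, \<surd>-T]\<close>.\<close>

locale inert_prime =
  fixes P :: "'a::{finite,field} poly"
  assumes odd_card: "odd (card (UNIV :: 'a set))"
    and monic: "lead_coeff P = 1"
    and irreducible: "irreducible P"
    and chi_P: "chi_q P = -1"
begin

lemma two_neq_zero: "(2::'a) \<noteq> 0"
  using odd_card by (rule two_neq_zero_if_odd_card)

lemma P_neq_0: "P \<noteq> 0"
  using monic by auto

lemma poly_P_0_neq_0: "poly P 0 \<noteq> 0" and poly_P_0_not_square: "\<nexists>y. poly P 0 = y\<^sup>2"
  using chi_P unfolding chi_q_def by (auto split: if_splits)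

lemma P_dvd_mult_iff: "P dvd a * b \<longleftrightarrow> P dvd a \<or> P dvd b"
  using irreducible by (intro prime_elem_dvd_mult_iff field_poly_irreducible_imp_prime)

lemma degree_P_pos: "0 < degree P"
  using irreducible P_neq_0 is_unit_iff_degree irreducible_not_unit by blast

lemma polnorm_gt_1: "1 < polnorm P"
proof -
  have "2 \<le> card (UNIV :: 'a set)"
    using card_mono[of UNIV "{0 :: 'a, 1}"] by simp
  moreover from this have "card (UNIV :: 'a set) ^ 1 \<le> card (UNIV :: 'a set) ^ degree P"
    using degree_P_pos by (intro power_increasing) auto
  ultimately show ?thesis
    by (simp add: polnorm_def)
qed

lemma not_dvd_T: "\<not> P dvd T"
proof
  assume "P dvd T"
  moreover have "irreducible (T :: 'a poly)"
    by (rule irreducible_linear_field_poly) simp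
  ultimately have "T dvd P"
    using irreducibleD' irreducible irreducible_not_unit by blast
  with poly_P_0_neq_0 show False
    by (simp add: dvd_iff_poly_eq_0[of 0, simplified])
qed

lemma not_dvd_square_plus_T: "\<not> P dvd C\<^sup>2 + T"
  using const_coeff_square_if_dvd_square_plus_T[OF two_neq_zero monic poly_P_0_neq_0]
    poly_P_0_not_square by blast

lemma dvd_sum_of_squares_iff: "P dvd A\<^sup>2 + T * B\<^sup>2 \<longleftrightarrow> P dvd A \<and> P dvd B"
proof
  assume dvd: "P dvd A\<^sup>2 + T * B\<^sup>2"
  have "P dvd B"
  proof (rule ccontr)
    assume "\<not> P dvd B"
    then obtain u v where "u * P + v * B = 1"
      using irreducible irreducible_bezout by blast
    then have uP: "u * P = 1 - v * B"
      by (simp add: algebra_simps)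
    have "(A * v)\<^sup>2 + T = v\<^sup>2 * (A\<^sup>2 + T * B\<^sup>2) + T * (u * P) * (1 + v * B)"
      unfolding uP by (simp add: algebra_simps power2_eq_square)
    moreover have "P dvd v\<^sup>2 * (A\<^sup>2 + T * B\<^sup>2)"
      using dvd by (rule dvd_mult)
    moreover have "P dvd T * (u * P) * (1 + v * B)"
      by (rule dvd_mult2, rule dvd_mult, rule dvd_triv_right)
    ultimately have "P dvd (A * v)\<^sup>2 + T"
      by (simp add: dvd_add)
    with not_dvd_square_plus_T show False
      by blast
  qed
  then have "P dvd T * (B * B)"
    by (intro dvd_mult dvd_mult2)
  with dvd have "P dvd A * A"
    by (simp add: dvd_add_left_iff flip: power2_eq_square)
  with \<open>P dvd B\<close> show "P dvd A \<and> P dvd B"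
    by (simp add: P_dvd_mult_iff)
next
  assume "P dvd A \<and> P dvd B"
  then obtain a b where "A = P * a" "B = P * b"
    by (auto elim!: dvdE)
  then have "A\<^sup>2 + T * B\<^sup>2 = P * (P * (a\<^sup>2 + T * b\<^sup>2))"
    by (simp add: algebra_simps power2_eq_square)
  then show "P dvd A\<^sup>2 + T * B\<^sup>2"
    by simp
qed

definition represented :: "nat \<Rightarrow> 'a poly \<Rightarrow> bool" where
  "represented n g \<longleftrightarrow> (\<exists>A B. P ^ n dvd g - (A\<^sup>2 + T * B\<^sup>2))"

lemma mod_in_Aq_iff: "g mod P ^ n \<in> Aq (P ^ n) \<longleftrightarrow> represented n g"
  unfolding represented_def Aq_def by (auto simp: mod_eq_dvd_iff)

lemma represented_mod: "represented n (g mod P ^ n) = represented n g"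
  by (simp flip: mod_in_Aq_iff)

lemma represented_0: "represented 0 g"
  by (simp add: represented_def)

lemma square_mod_P_eq_imp:
  assumes "x \<in> deg_below (degree P)" "y \<in> deg_below (degree P)" "y\<^sup>2 mod P = x\<^sup>2 mod P"
  shows "y = x \<or> y = -x"
proof -
  have "P dvd (y - x) * (y - (-x))"
    using assms(3) by (simp add: mod_eq_dvd_iff algebra_simps power2_eq_square)
  then have "P dvd y - x \<or> P dvd y - (-x)"
    by (rule P_dvd_mult_iff[THEN iffD1])
  moreover have "-x \<in> deg_below (degree P)"
    using assms(1) by (auto simp: deg_below_def)
  ultimately show ?thesis
    using assms(1,2) deg_below_eq_if_dvd_diff by blast
qed

lemma card_squares_mod_P: "polnorm P + 1 \<le> 2 * card ((\<lambda>A. A\<^sup>2 mod P) ` deg_below (degree P))"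
proof -
  let ?D = "deg_below (degree P) :: 'a poly set" and ?sq = "\<lambda>A. A\<^sup>2 mod P"
  have "card {y \<in> ?D - {0}. ?sq y = ?sq x} \<le> 2" if "x \<in> ?D - {0}" for x
  proof -
    have "card {y \<in> ?D - {0}. ?sq y = ?sq x} \<le> card {x, -x}"
      using that square_mod_P_eq_imp by (intro card_mono) auto
    also have "\<dots> \<le> 2"
      by (simp add: card_insert_if)
    finally show ?thesis .
  qed
  then have "card (?D - {0}) \<le> 2 * card (?sq ` (?D - {0}))"
    by (intro card_le_mult_card_image) auto
  moreover have "?sq ` ?D = insert (?sq 0) (?sq ` (?D - {0}))"
    by (auto simp: deg_below_def image_iff) (metis power_zero_numeral mod_0)
  moreover have "0 \<notin> ?sq ` (?D - {0})"
  proof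
    assume "0 \<in> ?sq ` (?D - {0})"
    then obtain x where "x \<in> ?D - {0}" "0 = x\<^sup>2 mod P"
      by blast
    with square_mod_P_eq_imp[of 0 x] show False
      by (auto simp: deg_below_def)
  qed
  moreover have "0 \<in> ?D"
    by (simp add: deg_below_def)
  then have "card (?D - {0}) + 1 = polnorm P"
    using polnorm_gt_1 by (simp add: card_Diff_singleton card_deg_below polnorm_def)
  ultimately show ?thesis
    by simp
qed

lemma represented_1: "represented 1 g"
proof -
  let ?D = "deg_below (degree P) :: 'a poly set"
  define squares where "squares = (\<lambda>A. A\<^sup>2 mod P) ` ?D"
  define shifted where "shifted = (\<lambda>y. (g - T * y) mod P) ` squares"
  have "squares \<subseteq> ?D" "shifted \<subseteq> ?D"
    unfolding squares_def shifted_def using mod_in_deg_below[OF P_neq_0] by auto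
  have "inj_on (\<lambda>y. (g - T * y) mod P) ?D"
  proof (rule inj_onI)
    fix y y'
    assume "y \<in> ?D" "y' \<in> ?D" "(g - T * y) mod P = (g - T * y') mod P"
    moreover from this have "P dvd T * (y' - y)"
      by (simp add: mod_eq_dvd_iff algebra_simps)
    then have "P dvd y' - y"
      using not_dvd_T P_dvd_mult_iff by blast
    ultimately show "y = y'"
      using deg_below_eq_if_dvd_diff by blast
  qed
  then have "card shifted = card squares"
    unfolding shifted_def using \<open>squares \<subseteq> ?D\<close> by (simp add: card_image inj_on_subset)
  have "squares \<inter> shifted \<noteq> {}"
  proof
    assume "squares \<inter> shifted = {}"
    then have "card squares + card shifted = card (squares \<union> shifted)"
      using \<open>squares \<subseteq> ?D\<close> \<open>shifted \<subseteq> ?D\<close> by (simp add: card_Un_disjoint finite_subset)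
    also have "\<dots> \<le> polnorm P"
      using \<open>squares \<subseteq> ?D\<close> \<open>shifted \<subseteq> ?D\<close> card_mono[OF finite_deg_below, of "squares \<union> shifted"]
      by (simp add: card_deg_below polnorm_def)
    finally show False
      using card_squares_mod_P \<open>card shifted = card squares\<close> unfolding squares_def by simp
  qed
  then obtain A y where "A\<^sup>2 mod P = (g - T * (y\<^sup>2 mod P)) mod P"
    unfolding squares_def shifted_def by auto
  also have "\<dots> = (g - T * y\<^sup>2) mod P"
    by (metis mod_diff_right_eq mod_mult_right_eq)
  finally have "P dvd A\<^sup>2 - (g - T * y\<^sup>2)"
    by (rule mod_eq_dvd_iff[THEN iffD1])
  moreover have "g - (A\<^sup>2 + T * y\<^sup>2) = - (A\<^sup>2 - (g - T * y\<^sup>2))"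
    by (simp add: algebra_simps)
  ultimately have "P dvd g - (A\<^sup>2 + T * y\<^sup>2)"
    by (simp only: dvd_minus_iff)
  then show ?thesis
    unfolding represented_def by auto
qed

lemma lift_square_term:
  assumes "P ^ n dvd g - (K * A\<^sup>2 + W)" "1 \<le> n" "\<not> P dvd smult 2 (K * A)"
  shows "\<exists>A'. P ^ Suc n dvd g - (K * A'\<^sup>2 + W)"
proof -
  obtain E where E: "g - (K * A\<^sup>2 + W) = P ^ n * E"
    using assms(1) by (rule dvdE)
  obtain u v where "u * P + v * smult 2 (K * A) = 1"
    using irreducible assms(3) by (rule irreducible_bezout)
  then have uP: "u * P = 1 - v * smult 2 (K * A)"
    by (simp add: algebra_simps)
  \<comment> \<open>Newton step: the linear term \<open>2 K A \<cdot> P\<^sup>n v E\<close> cancels \<open>P\<^sup>n E\<close> modulo \<open>P\<^sup>n\<^sup>+\<^sup>1\<close>.\<close>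
  have "g - (K * (A + P ^ n * (v * E))\<^sup>2 + W) = P ^ n * E * (u * P) - P ^ n * P ^ n * (K * (v * E)\<^sup>2)"
    unfolding uP using E by (simp add: algebra_simps power2_eq_square smult_two)
  moreover have "P ^ Suc n dvd P ^ n * E * (u * P)"
    by (simp add: mult_dvd_mono)
  moreover have "P ^ Suc n dvd P ^ n * P ^ n"
    using assms(2) le_imp_power_dvd[of "Suc n" "n + n" P] by (simp add: power_add)
  then have "P ^ Suc n dvd P ^ n * P ^ n * (K * (v * E)\<^sup>2)"
    by (rule dvd_mult2)
  ultimately show ?thesis
    by (metis dvd_diff)
qed

lemma represented_Suc_if_not_dvd:
  assumes "\<not> P dvd g" "represented n g" "1 \<le> n"
  shows "represented (Suc n) g"
proof -
  from assms(2) obtain A B where AB: "P ^ n dvd g - (A\<^sup>2 + T * B\<^sup>2)"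
    unfolding represented_def by blast
  have "\<not> (P dvd A \<and> P dvd B)"
  proof
    assume "P dvd A \<and> P dvd B"
    then have "P dvd A\<^sup>2 + T * B\<^sup>2"
      by (simp only: dvd_sum_of_squares_iff)
    moreover have "P dvd g - (A\<^sup>2 + T * B\<^sup>2)"
      using dvd_trans[OF dvd_power[of n P] AB] assms(3) by simp
    ultimately have "P dvd (g - (A\<^sup>2 + T * B\<^sup>2)) + (A\<^sup>2 + T * B\<^sup>2)"
      by (simp only: dvd_add)
    with assms(1) show False
      by simp
  qed
  then consider "\<not> P dvd A" | "\<not> P dvd B"
    by blast
  then show ?thesis
  proof cases
    case 1
    have "\<not> P dvd smult 2 (1 * A)"
      using 1 dvd_smult_cancel[OF _ two_neq_zero] by auto
    moreover have "P ^ n dvd g - (1 * A\<^sup>2 + T * B\<^sup>2)"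
      using AB by simp
    ultimately have "\<exists>A'. P ^ Suc n dvd g - (1 * A'\<^sup>2 + T * B\<^sup>2)"
      using assms(3) by (intro lift_square_term)
    then obtain A' where "P ^ Suc n dvd g - (1 * A'\<^sup>2 + T * B\<^sup>2)" ..
    then show ?thesis
      unfolding represented_def by auto
  next
    case 2
    have "\<not> P dvd T * B"
      using 2 not_dvd_T P_dvd_mult_iff by blast
    then have "\<not> P dvd smult 2 (T * B)"
      using dvd_smult_cancel[OF _ two_neq_zero] by blast
    moreover have "P ^ n dvd g - (T * B\<^sup>2 + A\<^sup>2)"
      using AB by (simp add: add.commute)
    ultimately have "\<exists>B'. P ^ Suc n dvd g - (T * B'\<^sup>2 + A\<^sup>2)"
      using assms(3) by (intro lift_square_term)
    then obtain B' where "P ^ Suc n dvd g - (T * B'\<^sup>2 + A\<^sup>2)" ..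
    then show ?thesis
      unfolding represented_def by (auto simp: add.commute)
  qed
qed

lemma represented_if_not_dvd: "\<not> P dvd g \<Longrightarrow> represented n g"
proof (induction n)
  case 0
  show ?case
    by (rule represented_0)
next
  case (Suc n)
  then show ?case
    using represented_1 represented_Suc_if_not_dvd by (cases "n = 0") auto
qed

lemma sum_of_squares_eq_P2_mult:
  assumes "P dvd A\<^sup>2 + T * B\<^sup>2"
  obtains a b where "A\<^sup>2 + T * B\<^sup>2 = P\<^sup>2 * (a\<^sup>2 + T * b\<^sup>2)"
proof -
  from assms have "P dvd A \<and> P dvd B"
    by (simp only: dvd_sum_of_squares_iff)
  then obtain a b where "A = P * a" "B = P * b"
    unfolding dvd_def by blast
  then have "A\<^sup>2 + T * B\<^sup>2 = P\<^sup>2 * (a\<^sup>2 + T * b\<^sup>2)"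
    by (simp add: algebra_simps power2_eq_square)
  then show thesis
    by (rule that)
qed

lemma represented_mult_P2_iff: "represented (n + 2) (P\<^sup>2 * g) \<longleftrightarrow> represented n g"
proof
  assume "represented (n + 2) (P\<^sup>2 * g)"
  then obtain A B where AB: "P ^ (n + 2) dvd P\<^sup>2 * g - (A\<^sup>2 + T * B\<^sup>2)"
    unfolding represented_def by blast
  then have "P dvd P\<^sup>2 * g - (A\<^sup>2 + T * B\<^sup>2)"
    by (rule dvd_trans[rotated]) (simp add: dvd_power)
  with dvd_diff[of P "P\<^sup>2 * g"] have "P dvd A\<^sup>2 + T * B\<^sup>2"
    by (fastforce simp: power2_eq_square)
  then obtain a b where "A\<^sup>2 + T * B\<^sup>2 = P\<^sup>2 * (a\<^sup>2 + T * b\<^sup>2)"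
    by (rule sum_of_squares_eq_P2_mult)
  moreover have "P ^ (n + 2) = P\<^sup>2 * P ^ n"
    by (simp only: power_add mult.commute)
  ultimately have "P\<^sup>2 * P ^ n dvd P\<^sup>2 * (g - (a\<^sup>2 + T * b\<^sup>2))"
    using AB by (simp only: right_diff_distrib)
  then show "represented n g"
    unfolding represented_def using P_neq_0 by auto
next
  assume "represented n g"
  then obtain a b where "P ^ n dvd g - (a\<^sup>2 + T * b\<^sup>2)"
    unfolding represented_def by blast
  then have "P\<^sup>2 * P ^ n dvd P\<^sup>2 * (g - (a\<^sup>2 + T * b\<^sup>2))"
    by simp
  moreover have "P\<^sup>2 * (g - (a\<^sup>2 + T * b\<^sup>2)) = P\<^sup>2 * g - ((P * a)\<^sup>2 + T * (P * b)\<^sup>2)"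
    by (simp add: algebra_simps power2_eq_square)
  ultimately show "represented (n + 2) (P\<^sup>2 * g)"
    unfolding represented_def by (metis add.commute power_add)
qed

lemma represented_Suc_Suc_iff:
  "represented (Suc (Suc n)) g \<longleftrightarrow> \<not> P dvd g \<or> P\<^sup>2 dvd g \<and> represented n (g div P\<^sup>2)"
proof (cases "P\<^sup>2 dvd g")
  case True
  have "represented (n + 2) (P\<^sup>2 * (g div P\<^sup>2)) \<longleftrightarrow> represented n (g div P\<^sup>2)"
    by (rule represented_mult_P2_iff)
  with True show ?thesis
    using represented_if_not_dvd by (auto simp: power2_eq_square)
next
  case False
  have "\<not> represented (Suc (Suc n)) g" if "P dvd g"
  proof
    assume "represented (Suc (Suc n)) g"
    then obtain A B where "P ^ Suc (Suc n) dvd g - (A\<^sup>2 + T * B\<^sup>2)"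
      unfolding represented_def by blast
    moreover have "P\<^sup>2 dvd P ^ Suc (Suc n)"
      by (rule le_imp_power_dvd) simp
    ultimately have P2: "P\<^sup>2 dvd g - (A\<^sup>2 + T * B\<^sup>2)"
      by (metis dvd_trans)
    then have "P dvd g - (A\<^sup>2 + T * B\<^sup>2)"
      by (rule dvd_trans[rotated]) (simp add: power2_eq_square)
    with dvd_diff[OF that] have "P dvd A\<^sup>2 + T * B\<^sup>2"
      by fastforce
    then obtain a b where "A\<^sup>2 + T * B\<^sup>2 = P\<^sup>2 * (a\<^sup>2 + T * b\<^sup>2)"
      by (rule sum_of_squares_eq_P2_mult)
    with P2 have "P\<^sup>2 dvd (g - (A\<^sup>2 + T * B\<^sup>2)) + (A\<^sup>2 + T * B\<^sup>2)"
      by (simp only: dvd_add dvd_triv_left)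
    with False show False
      by simp
  qed
  with False show ?thesis
    using represented_if_not_dvd by blast
qed

lemma represented_Suc_iff: "\<not> P ^ n dvd g \<Longrightarrow> represented (Suc n) g \<longleftrightarrow> represented n g"
proof (induction n arbitrary: g rule: less_induct)
  case (less n)
  show ?case
  proof (cases "P dvd g")
    case False
    then show ?thesis
      using represented_if_not_dvd by blast
  next
    case True
    with less.prems obtain m where n: "n = Suc (Suc m)"
      by (metis One_nat_def not0_implies_Suc one_dvd power_0 power_one_right)
    have "\<not> P ^ m dvd g div P\<^sup>2" if "P\<^sup>2 dvd g"
    proof
      assume "P ^ m dvd g div P\<^sup>2"
      then have "P\<^sup>2 * P ^ m dvd g"
        using that by (metis dvd_div_mult_self mult_dvd_mono dvd_refl mult.commute)
      with less.prems show False
        by (simp add: n power2_eq_square mult.assoc)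
    qed
    then show ?thesis
      unfolding n represented_Suc_Suc_iff using less.IH[of "Suc m"] less.IH[of m] by (auto simp: n)
  qed
qed

lemma represented_mod_add: "represented n (g mod P ^ n + c) = represented n (g + c)"
  by (metis mod_add_left_eq represented_mod)

definition admissible :: "nat \<Rightarrow> 'a poly list \<Rightarrow> 'a poly \<Rightarrow> bool" where
  "admissible n h r \<longleftrightarrow> (\<forall>i<length h. represented n (r + h ! i))"

lemma admissible_mod: "admissible n h (g mod P ^ n) = admissible n h g"
  by (simp add: admissible_def represented_mod_add)

lemma card_Aqh_power: "card (Aqh (P ^ n) h) = count_mod (P ^ n) (admissible n h)"
proof -
  have "Aqh (P ^ n) h = {r \<in> deg_below (degree (P ^ n)). admissible n h r}"
  proof (intro set_eqI iffI)
    fix r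
    assume "r \<in> Aqh (P ^ n) h"
    then obtain f where "r = f mod P ^ n" "\<forall>i<length h. represented n (f + h ! i)"
      by (auto simp: Aqh_def mod_in_Aq_iff)
    then show "r \<in> {r \<in> deg_below (degree (P ^ n)). admissible n h r}"
      using P_neq_0 by (simp add: admissible_def represented_mod_add mod_in_deg_below)
  next
    fix r
    assume "r \<in> {r \<in> deg_below (degree (P ^ n)). admissible n h r}"
    then have "r = r mod P ^ n" "\<forall>i<length h. (r + h ! i) mod P ^ n \<in> Aq (P ^ n)"
      by (simp_all add: mod_eq_self_if_deg_below admissible_def mod_in_Aq_iff)
    then show "r \<in> Aqh (P ^ n) h"
      unfolding Aqh_def by blast
  qed
  then show ?thesis
    by (simp add: count_mod_def)
qed

lemma count_represented_shift:
  "count_mod (P ^ n) (\<lambda>r. represented n (r + c)) = count_mod (P ^ n) (represented n)"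
  by (rule count_mod_shift) (simp_all add: P_neq_0 represented_mod)

lemma count_power_dvd_shift: "count_mod (P ^ Suc n) (\<lambda>r. P ^ n dvd r + c) = polnorm P"
proof -
  have periodic: "P ^ n dvd g mod P ^ n + c \<longleftrightarrow> P ^ n dvd g + c" for g
    by (metis dvd_mod_iff dvd_refl mod_add_left_eq)
  have "count_mod (P ^ n) (\<lambda>r. P ^ n dvd r + c) = count_mod (P ^ n) (\<lambda>r. P ^ n dvd r)"
    by (rule count_mod_shift) (simp_all add: P_neq_0 dvd_mod_iff)
  also have "\<dots> = 1"
    using P_neq_0 by (simp add: count_mod_dvd)
  finally show ?thesis
    using count_mod_mult[of "P ^ n" P "\<lambda>r. P ^ n dvd r + c"] P_neq_0 periodic
    by (simp add: mult.commute)
qed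

lemma count_represented_Suc_Suc:
  "count_mod (P ^ Suc (Suc n)) (represented (Suc (Suc n)))
    = (polnorm P ^ Suc (Suc n) - polnorm P ^ Suc n) + count_mod (P ^ n) (represented n)"
proof -
  let ?M = "P ^ Suc (Suc n)"
  have "count_mod ?M (represented (Suc (Suc n)))
      = count_mod ?M (\<lambda>r. \<not> P dvd r) + count_mod ?M (\<lambda>r. P\<^sup>2 dvd r \<and> represented n (r div P\<^sup>2))"
    unfolding represented_Suc_Suc_iff by (rule count_mod_disj) (auto simp: power2_eq_square)
  moreover have "count_mod ?M (\<lambda>r. P dvd r) = polnorm P ^ Suc n"
    using count_mod_mult[of P "P ^ Suc n" "\<lambda>r. P dvd r"] P_neq_0
    by (simp add: dvd_mod_iff count_mod_dvd polnorm_mult polnorm_power)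
  moreover have "count_mod ?M (\<lambda>r. P\<^sup>2 dvd r \<and> represented n (r div P\<^sup>2)) = count_mod (P ^ n) (represented n)"
    using count_mod_mult_dvd[of "P\<^sup>2" "P ^ n" "represented n"] P_neq_0
    by (simp add: power_add[symmetric] power2_eq_square mult.assoc)
  ultimately show ?thesis
    by (simp add: count_mod_not polnorm_power del: power_Suc)
qed

lemma count_admissible_Suc_le:
  "count_mod (P ^ Suc n) (admissible (Suc n) h) \<le> polnorm P * count_mod (P ^ n) (admissible n h) + length h * polnorm P"
  "polnorm P * count_mod (P ^ n) (admissible n h) \<le> count_mod (P ^ Suc n) (admissible (Suc n) h) + length h * polnorm P"
proof -
  let ?E = "\<lambda>r. \<exists>i\<in>{..<length h}. P ^ n dvd r + h ! i"
  have same: "admissible (Suc n) h r \<longleftrightarrow> admissible n h r" if "\<not> ?E r" for r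
    using that represented_Suc_iff by (auto simp: admissible_def)
  have "count_mod (P ^ Suc n) ?E \<le> (\<Sum>i<length h. count_mod (P ^ Suc n) (\<lambda>r. P ^ n dvd r + h ! i))"
    by (rule count_mod_Bex_le) simp
  also have "\<dots> = length h * polnorm P"
    by (simp add: count_power_dvd_shift del: power_Suc)
  finally have E: "count_mod (P ^ Suc n) ?E \<le> length h * polnorm P" .
  have "count_mod (P ^ Suc n) (admissible n h) = polnorm P * count_mod (P ^ n) (admissible n h)"
    using count_mod_mult[of "P ^ n" P "admissible n h"] P_neq_0 by (simp add: admissible_mod mult.commute)
  moreover have "count_mod (P ^ Suc n) (admissible (Suc n) h) \<le> count_mod (P ^ Suc n) (admissible n h) + count_mod (P ^ Suc n) ?E"
    by (rule count_mod_le_add) (use same in blast)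
  moreover have "count_mod (P ^ Suc n) (admissible n h) \<le> count_mod (P ^ Suc n) (admissible (Suc n) h) + count_mod (P ^ Suc n) ?E"
    by (rule count_mod_le_add) (use same in blast)
  ultimately show
    "count_mod (P ^ Suc n) (admissible (Suc n) h) \<le> polnorm P * count_mod (P ^ n) (admissible n h) + length h * polnorm P"
    "polnorm P * count_mod (P ^ n) (admissible n h) \<le> count_mod (P ^ Suc n) (admissible (Suc n) h) + length h * polnorm P"
    using E by linarith+
qed

lemma count_admissible_le_represented:
  "h \<noteq> [] \<Longrightarrow> count_mod (P ^ n) (admissible n h) \<le> count_mod (P ^ n) (represented n)"
  using count_mod_mono[of "admissible n h" "\<lambda>r. represented n (r + h ! 0)" "P ^ n"]
  by (simp add: admissible_def count_represented_shift)

lemma count_not_admissible: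
  "polnorm P ^ n - count_mod (P ^ n) (admissible n h) \<le> length h * (polnorm P ^ n - count_mod (P ^ n) (represented n))"
  "\<not> P dvd Delta_h h \<Longrightarrow>
    polnorm P ^ n - count_mod (P ^ n) (admissible n h) = length h * (polnorm P ^ n - count_mod (P ^ n) (represented n))"
proof -
  let ?bad = "\<lambda>i r. \<not> represented n (r + h ! i)"
  have "(\<lambda>r. \<exists>i\<in>{..<length h}. ?bad i r) = (\<lambda>r. \<not> admissible n h r)"
    by (auto simp: admissible_def)
  then have "polnorm P ^ n - count_mod (P ^ n) (admissible n h) = count_mod (P ^ n) (\<lambda>r. \<exists>i\<in>{..<length h}. ?bad i r)"
    by (simp add: count_mod_not polnorm_power)
  moreover have "(\<Sum>i<length h. count_mod (P ^ n) (?bad i)) = length h * (polnorm P ^ n - count_mod (P ^ n) (represented n))"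
    by (simp add: count_mod_not count_represented_shift polnorm_power)
  ultimately show
    "polnorm P ^ n - count_mod (P ^ n) (admissible n h) \<le> length h * (polnorm P ^ n - count_mod (P ^ n) (represented n))"
    using count_mod_Bex_le[of "{..<length h}" "P ^ n" ?bad] by simp
  assume "\<not> P dvd Delta_h h"
  \<comment> \<open>Non-represented values are divisible by \<open>P\<close>, so two shifts \<open>h\<^sub>i, h\<^sub>j\<close> can both fail only if \<open>P\<close> divides \<open>h\<^sub>i - h\<^sub>j\<close>.\<close>
  have "\<not> (?bad i r \<and> ?bad j r)" if "i < length h" "j < length h" "i \<noteq> j" for i j r
  proof
    assume "?bad i r \<and> ?bad j r"
    then have "P dvd (r + h ! i) - (r + h ! j)"
      using represented_if_not_dvd by (meson dvd_diff)
    then have "P dvd Delta_h h"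
      using dvd_Delta_h[OF that] by (simp add: dvd_trans)
    with \<open>\<not> P dvd Delta_h h\<close> show False ..
  qed
  with \<open>polnorm P ^ n - _ = _\<close> \<open>(\<Sum>i<length h. _) = _\<close> show
    "polnorm P ^ n - count_mod (P ^ n) (admissible n h) = length h * (polnorm P ^ n - count_mod (P ^ n) (represented n))"
    using count_mod_Bex_disjoint[of "{..<length h}" ?bad "P ^ n"] by simp
qed

section \<open>Densities\<close>

definition rep_density :: "nat \<Rightarrow> real" where
  "rep_density n = real (count_mod (P ^ n) (represented n)) / real (polnorm P) ^ n"

definition adm_density :: "'a poly list \<Rightarrow> nat \<Rightarrow> real" where
  "adm_density h n = real (count_mod (P ^ n) (admissible n h)) / real (polnorm P) ^ n"

lemma rep_density_eq_adm_density: "rep_density = adm_density [0]"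
proof -
  have single: "admissible n [0] = represented n" for n
    by (simp add: admissible_def fun_eq_iff)
  show ?thesis
    unfolding rep_density_def adm_density_def single ..
qed

lemma adm_density_Suc: "\<bar>adm_density h (Suc n) - adm_density h n\<bar> \<le> length h * (1 / polnorm P) ^ n"
proof -
  let ?Q = "real (polnorm P)"
    and ?c' = "real (count_mod (P ^ Suc n) (admissible (Suc n) h))"
    and ?c = "real (count_mod (P ^ n) (admissible n h))"
  have Q: "?Q > 0"
    using polnorm_gt_1 by simp
  have "\<bar>?c' - ?Q * ?c\<bar> \<le> length h * ?Q"
    using count_admissible_Suc_le[of n h, THEN of_nat_mono[where 'a = real]] by simp
  moreover have "adm_density h (Suc n) - adm_density h n = (?c' - ?Q * ?c) / ?Q ^ Suc n"
    using Q by (simp add: adm_density_def field_simps)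
  moreover have "\<bar>(?c' - ?Q * ?c) / ?Q ^ Suc n\<bar> = \<bar>?c' - ?Q * ?c\<bar> / ?Q ^ Suc n"
    using Q by simp
  ultimately have "\<bar>adm_density h (Suc n) - adm_density h n\<bar> \<le> length h * ?Q / ?Q ^ Suc n"
    using Q by (simp add: divide_right_mono del: power_Suc)
  also have "\<dots> = length h * (1 / ?Q) ^ n"
    using Q by (simp add: power_one_over)
  finally show ?thesis .
qed

lemma adm_density_convergent: "convergent (adm_density h)"
  using polnorm_gt_1 adm_density_Suc by (intro convergent_if_diff_le_geometric) auto

lemma rep_density_Suc_Suc:
  "rep_density (Suc (Suc n)) = 1 - 1 / polnorm P + rep_density n / real (polnorm P) ^ 2"
proof -
  let ?Q = "real (polnorm P)" and ?c = "real (count_mod (P ^ n) (represented n))"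
  have "polnorm P ^ Suc n \<le> polnorm P ^ Suc (Suc n)"
    using polnorm_gt_1 by (intro power_increasing) auto
  then have "real (count_mod (P ^ Suc (Suc n)) (represented (Suc (Suc n)))) = ?Q ^ Suc (Suc n) - ?Q ^ Suc n + ?c"
    by (simp add: count_represented_Suc_Suc of_nat_diff del: power_Suc)
  then have "rep_density (Suc (Suc n)) = (?Q ^ Suc (Suc n) - ?Q ^ Suc n + ?c) / ?Q ^ Suc (Suc n)"
    by (simp add: rep_density_def del: power_Suc)
  also have "\<dots> = 1 - 1 / ?Q + ?c / ?Q ^ n / ?Q ^ 2"
    using polnorm_gt_1 by (simp add: field_simps power2_eq_square)
  finally show ?thesis
    by (simp only: rep_density_def)
qed

lemma rep_density_limit: "rep_density \<longlonglongrightarrow> real (polnorm P) / (real (polnorm P) + 1)"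
proof -
  let ?Q = "real (polnorm P)"
  obtain L where L: "rep_density \<longlonglongrightarrow> L"
    using adm_density_convergent[of "[0]"] unfolding rep_density_eq_adm_density convergent_def by blast
  then have "(\<lambda>n. rep_density (Suc (Suc n))) \<longlonglongrightarrow> L"
    by (intro LIMSEQ_Suc)
  moreover have "(\<lambda>n. rep_density (Suc (Suc n))) \<longlonglongrightarrow> 1 - 1 / ?Q + L / ?Q\<^sup>2"
    unfolding rep_density_Suc_Suc using polnorm_gt_1 by (intro tendsto_intros L) auto
  ultimately have "L = 1 - 1 / ?Q + L / ?Q\<^sup>2"
    by (rule LIMSEQ_unique)
  then have "?Q + L * (?Q * ?Q) = L + ?Q * ?Q"
    using polnorm_gt_1 by (simp add: field_simps power2_eq_square)
  then have "(L * (?Q + 1) - ?Q) * (?Q - 1) = 0"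
    by (simp add: algebra_simps)
  then have "L * (?Q + 1) = ?Q"
    using polnorm_gt_1 by simp
  then have "L = ?Q / (?Q + 1)"
    using polnorm_gt_1 by (simp add: eq_divide_eq)
  with L show ?thesis
    by simp
qed

lemma adm_density_le_rep_density: "h \<noteq> [] \<Longrightarrow> adm_density h n \<le> rep_density n"
  using count_admissible_le_represented[of h n] polnorm_gt_1
  by (simp add: adm_density_def rep_density_def divide_right_mono)

lemma adm_density_lower:
  "1 - adm_density h n \<le> real (length h) * (1 - rep_density n)"
  "\<not> P dvd Delta_h h \<Longrightarrow> 1 - adm_density h n = real (length h) * (1 - rep_density n)"
proof -
  let ?Q = "real (polnorm P) ^ n"
    and ?a = "polnorm P ^ n - count_mod (P ^ n) (admissible n h)"
    and ?r = "polnorm P ^ n - count_mod (P ^ n) (represented n)"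
  have Q: "?Q > 0"
    using polnorm_gt_1 by simp
  have le: "count_mod (P ^ n) S \<le> polnorm P ^ n" for S
    using count_mod_le_polnorm[of "P ^ n" S] by (simp add: polnorm_power)
  have adm: "1 - adm_density h n = real ?a / ?Q"
    using Q le by (simp add: adm_density_def of_nat_diff diff_divide_distrib)
  have rep: "real (length h) * (1 - rep_density n) = real (length h * ?r) / ?Q"
    using Q le by (simp add: rep_density_def of_nat_diff field_simps)
  show "1 - adm_density h n \<le> real (length h) * (1 - rep_density n)"
    unfolding adm rep using Q count_not_admissible(1)[of n h, THEN of_nat_mono[where 'a = real]]
    by (simp add: divide_right_mono)
  assume "\<not> P dvd Delta_h h"
  then show "1 - adm_density h n = real (length h) * (1 - rep_density n)"
    unfolding adm rep using count_not_admissible(2)[of h n] by simp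
qed

lemma adm_density_limit_bounds:
  assumes "h \<noteq> []" and L: "adm_density h \<longlonglongrightarrow> L"
  shows "1 / (real (polnorm P) + 1) \<le> 1 - L" "1 - L \<le> real (length h) / (real (polnorm P) + 1)"
    "\<not> P dvd Delta_h h \<Longrightarrow> 1 - L = real (length h) / (real (polnorm P) + 1)"
proof -
  let ?Q = "real (polnorm P)"
  have one_minus: "1 - ?Q / (?Q + 1) = 1 / (?Q + 1)"
    using polnorm_gt_1 by (simp add: field_simps)
  have "(\<lambda>n. length h * (1 - rep_density n)) \<longlonglongrightarrow> length h * (1 - ?Q / (?Q + 1))"
    by (intro tendsto_intros rep_density_limit)
  then have lower: "(\<lambda>n. length h * (1 - rep_density n)) \<longlonglongrightarrow> length h / (?Q + 1)"
    unfolding one_minus by simp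
  have "L \<le> ?Q / (?Q + 1)"
    using L rep_density_limit by (rule LIMSEQ_le) (use adm_density_le_rep_density assms(1) in auto)
  then show "1 / (?Q + 1) \<le> 1 - L"
    by (simp add: one_minus[symmetric])
  have "(\<lambda>n. 1 - adm_density h n) \<longlonglongrightarrow> 1 - L"
    using L by (intro tendsto_intros)
  then show "1 - L \<le> length h / (?Q + 1)"
    using lower by (rule LIMSEQ_le) (use adm_density_lower in auto)
  assume "\<not> P dvd Delta_h h"
  then have "(\<lambda>n. 1 - adm_density h n) = (\<lambda>n. length h * (1 - rep_density n))"
    by (simp add: adm_density_lower fun_eq_iff)
  with \<open>(\<lambda>n. 1 - adm_density h n) \<longlonglongrightarrow> 1 - L\<close> lower show "1 - L = length h / (?Q + 1)"
    using LIMSEQ_unique by metis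
qed

end

theorem mainTheorem10:
  fixes P :: "'a::{finite,field} poly" and h :: "'a poly list"
  assumes "odd (card (UNIV :: 'a set))"
    and "lead_coeff P = 1" and "irreducible P"
    and "chi_q P = -1"
    and "h \<noteq> []" and "distinct h"
  shows "\<exists>\<eta>::real. 1 \<le> \<eta> \<and> \<eta> \<le> real (length h) \<and>
           (\<lambda>\<nu>. real (card (Aqh (P ^ \<nu>) h)) / real (polnorm P) ^ \<nu>)
              \<longlonglongrightarrow> 1 - \<eta> / (real (polnorm P) + 1) \<and>
           (h = [0] \<longrightarrow> \<eta> = 1) \<and>
           (\<not> P dvd Delta_h h \<longrightarrow> \<eta> = real (length h))"
proof -
  interpret inert_prime P
    using assms(1-4) by unfold_locales
  obtain L where L: "adm_density h \<longlonglongrightarrow> L"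
    using adm_density_convergent convergent_def by blast
  note bounds = adm_density_limit_bounds[OF \<open>h \<noteq> []\<close> L]
  define \<eta> where "\<eta> = (1 - L) * (real (polnorm P) + 1)"
  have Q: "real (polnorm P) + 1 > 0"
    by simp
  have "1 \<le> \<eta>" "\<eta> \<le> real (length h)" "\<not> P dvd Delta_h h \<Longrightarrow> \<eta> = real (length h)"
    using bounds Q by (simp_all add: \<eta>_def pos_divide_le_eq pos_le_divide_eq eq_divide_eq)
  moreover have "1 - \<eta> / (real (polnorm P) + 1) = L"
    using Q by (simp add: \<eta>_def)
  moreover have "(\<lambda>\<nu>. real (card (Aqh (P ^ \<nu>) h)) / real (polnorm P) ^ \<nu>) = adm_density h"
    by (simp add: fun_eq_iff card_Aqh_power adm_density_def)
  moreover have "\<not> P dvd Delta_h [0]"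
    using irreducible irreducible_not_unit by (simp add: Delta_h_singleton)
  ultimately show ?thesis
    using L by auto
qed

end
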